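(* Let $(G,u)$ be a countable unperforated partially ordered abelian group with order unit $u$. Then $$\bigcap_{\tau\in S(G,u)}\tau(G)=\{\lambda\in\mathbb R:\ \exists g\in G \text{ such that } \tau(g)=\lambda \text{ for all }\tau\in S(G,u)\}.$$
   Context: $u$ is an order unit: for every $g$ there is $n\in\mathbb Z^+$ with $nu-g\ge0$. Unperforated: $ng\ge0$ for some $n\in\mathbb N$ implies $g\ge0$. $S(G,u)$ is the set of states, i.e. homomorphisms $\tau:G\to\mathbb R$ with $\tau(G^+)\ge0$ and $\tau(u)=1$. *)

theory Defs
  imports Complex_Main "HOL-Library.Countable"
begin

text \<open>A partially ordered abelian group is modelled by the type class ordered_ab_group_add
  (partial order, translation invariant); the positive cone is the set of elements \<ge> 0.\<close>

primrec natmul :: "nat \<Rightarrow> 'a::monoid_add \<Rightarrow> 'a" where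
  "natmul 0 g = 0"
| "natmul (Suc n) g = g + natmul n g"

definition order_unit :: "'a::ordered_ab_group_add \<Rightarrow> bool" where
  "order_unit u \<longleftrightarrow> (\<forall>g. \<exists>n::nat. n > 0 \<and> natmul n u - g \<ge> 0)"

definition unperforated :: "'a::ordered_ab_group_add itself \<Rightarrow> bool" where
  "unperforated _ \<longleftrightarrow> (\<forall>(g::'a) (n::nat). n > 0 \<and> natmul n g \<ge> 0 \<longrightarrow> g \<ge> 0)"

definition states :: "'a::ordered_ab_group_add \<Rightarrow> ('a \<Rightarrow> real) set" where
  "states u = {\<tau>. (\<forall>a b. \<tau> (a + b) = \<tau> a + \<tau> b) \<and> (\<forall>g. g \<ge> 0 \<longrightarrow> \<tau> g \<ge> 0) \<and> \<tau> u = 1}"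

end

theory Submission
  imports Defs "HOL-Analysis.Analysis"
begin

text \<open>Let \<open>S = S(G,u)\<close>, a closed subset of the product space \<open>\<real>\<^sup>G\<close>, which is completely
  metrizable because \<open>G\<close> is countable. If \<open>r\<close> lies in every \<open>\<tau>(G)\<close>, the closed sets
  \<open>{\<tau> \<in> S. \<tau> g = r}\<close>, \<open>g \<in> G\<close>, cover \<open>S\<close>, so by Baire's theorem one of them contains a
  nonempty relatively open subset of \<open>S\<close>. But \<open>S\<close> is convex and evaluation at \<open>g\<close> is
  affine, so on the segment from such a point \<open>p\<close> to any \<open>s \<in> S\<close> it is constant near \<open>p\<close>,
  hence constant, and \<open>s g = r\<close>.\<close>

lemma closed_states: "closed (states (u::'a::ordered_ab_group_add))"
proof -
  have "states u = (\<Inter>a. \<Inter>b. {\<tau>. \<tau> (a + b) = \<tau> a + \<tau> b})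
      \<inter> (\<Inter>g\<in>{g. g \<ge> 0}. {\<tau>. 0 \<le> \<tau> g}) \<inter> {\<tau>. \<tau> u = 1}"
    unfolding states_def by auto
  then show ?thesis
    by (simp only:) (intro closed_Int closed_INT ballI closed_Collect_eq closed_Collect_le
        continuous_on_add continuous_on_const continuous_on_product_coordinates)
qed

lemma states_convex_combination:
  assumes "p \<in> states u" "s \<in> states u" "0 \<le> d" "d \<le> 1"
  shows "(\<lambda>x. (1 - d) * p x + d * s x) \<in> states u"
  using assms by (simp add: states_def distrib_left)

lemma Baire_closed_cover:
  assumes "completely_metrizable_space X" "topspace X \<noteq> {}" "countable \<G>"
    and "\<And>T. T \<in> \<G> \<Longrightarrow> closedin X T" "\<Union>\<G> = topspace X"
  shows "\<exists>T\<in>\<G>. X interior_of T \<noteq> {}"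
  using Baire_category_alt[of X \<G>] assms by (metis interior_of_topspace)

lemma segment_start_in_open:
  fixes p s :: "'a \<Rightarrow> real"
  assumes "open U" "p \<in> U"
  obtains d where "0 < d" "d < 1" "(\<lambda>x. (1 - d) * p x + d * s x) \<in> U"
proof -
  define h where "h d = (\<lambda>x. (1 - d) * p x + d * s x)" for d :: real
  have "continuous_on UNIV h"
    unfolding h_def by (intro continuous_on_coordinatewise_then_product continuous_intros)
  then have "open (h -` U)"
    using \<open>open U\<close> by (simp add: continuous_on_open_vimage)
  moreover have "0 \<in> h -` U"
    using \<open>p \<in> U\<close> by (simp add: h_def)
  ultimately obtain e where "e > 0" "ball 0 e \<subseteq> h -` U"
    by (meson open_contains_ball)
  then have "h (min (e/2) (1/2)) \<in> U"
    by (auto simp: subset_iff)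
  with \<open>e > 0\<close> show ?thesis
    by (intro that[of "min (e/2) (1/2)"]) (auto simp: h_def)
qed

lemma states_eval_constant_if_locally_constant:
  assumes "open U" "p \<in> U" "p \<in> states u"
    and const: "\<And>\<tau>. \<tau> \<in> U \<inter> states u \<Longrightarrow> \<tau> g = r"
    and "s \<in> states u"
  shows "s g = r"
proof -
  obtain d where d: "0 < d" "d < 1" and in_U: "(\<lambda>x. (1 - d) * p x + d * s x) \<in> U"
    using segment_start_in_open[OF \<open>open U\<close> \<open>p \<in> U\<close>] by blast
  have "(1 - d) * p g + d * s g = r"
    using const[OF IntI[OF in_U states_convex_combination]] assms d by simp
  moreover have "p g = r"
    using const assms by blast
  ultimately show ?thesis
    using d by (simp add: algebra_simps)
qed

theorem mainTheorem10:
  fixes u :: "'a::{ordered_ab_group_add, countable}"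
  assumes "order_unit u"
    and "unperforated TYPE('a)"
  shows "(\<Inter>\<tau>\<in>states u. range \<tau>) = {r. \<exists>g. \<forall>\<tau>\<in>states u. \<tau> g = (r::real)}"
proof (intro equalityI subsetI)
  fix r assume r: "r \<in> (\<Inter>\<tau>\<in>states u. range \<tau>)"
  let ?X = "top_of_set (states u)"
  define level where "level g = states u \<inter> {\<tau>. \<tau> g = r}" for g
  show "r \<in> {r. \<exists>g. \<forall>\<tau>\<in>states u. \<tau> g = r}"
  proof (cases "states u = {}")
    case False
    have "completely_metrizable_space ?X"
      by (rule completely_metrizable_space_closedin[OF completely_metrizable_space_euclidean])
        (simp add: closed_states flip: closed_closedin)
    moreover have "closedin ?X (level g)" for g
      unfolding level_def
      by (intro closedin_closed_Int closed_Collect_eq continuous_on_product_coordinates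
          continuous_on_const)
    moreover have "\<Union>(range level) = topspace ?X"
      using r by (auto simp: level_def)
    ultimately obtain g where "?X interior_of level g \<noteq> {}"
      using Baire_closed_cover[of ?X "range level"] False by auto
    then obtain p V where "openin ?X V" "p \<in> V" "V \<subseteq> level g"
      by (auto simp: interior_of_def)
    then obtain U where "open U" "p \<in> U \<inter> states u" "U \<inter> states u \<subseteq> level g"
      by (auto simp: openin_open)
    then have "\<forall>\<tau>\<in>states u. \<tau> g = r"
      using states_eval_constant_if_locally_constant[of U p u g r] by (auto simp: level_def)
    then show ?thesis
      by blast
  qed simp
qed auto

end
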